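(* Let $g \geq 2$ and $h \geq 4$ be integers, and let $x_h$ be the unique real number in $(0,\pi)$ satisfying \[ \frac{\sin x_h}{x_h} = \left( \frac{4}{3 - \cos(\pi/h)} - 1 \right)^h . \] Then for every $\varepsilon > 0$ there is $N_0 = N_0(h,g,\varepsilon)$ such that for all $N \geq N_0$, every $B_h[g]$-set $A \subseteq [N]$ satisfies \[ |A| \leq (1+\varepsilon) \left( \frac{x_h \, h! \, h \, g \, N}{\pi} \right)^{1/h}. \] (That is, $|A| \leq (1+o_N(1)) \left( \frac{x_h h! h g N}{\pi}\right)^{1/h}$.)
   Context: $[N] = \{1,2,\dots,N\}$. For positive integers $h,g$, a set $A \subseteq [N]$ is a $B_h[g]$-set if for every integer $n$ there are at most $g$ distinct multisets $\{a_1,\dots,a_h\}$ of size $h$ with all $a_i \in A$ and $a_1 + \dots + a_h = n$. *)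

theory Defs
  imports "HOL-Analysis.Analysis" "HOL-Library.Multiset"
begin

definition rep_count :: "nat \<Rightarrow> nat set \<Rightarrow> nat \<Rightarrow> nat" where
  "rep_count h A n = card {M :: nat multiset. size M = h \<and> set_mset M \<subseteq> A \<and> sum_mset M = n}"

definition Bhg_set :: "nat \<Rightarrow> nat \<Rightarrow> nat set \<Rightarrow> bool" where
  "Bhg_set h g A \<longleftrightarrow> (\<forall>n. rep_count h A n \<le> g)"

end

theory Submission
  imports Defs "HOL-Combinatorics.Multiset_Permutations"
begin

text \<open>
  Let \<open>f(\<theta>)\<close> be the sum of \<open>e^(i a \<theta>)\<close> over \<open>a \<in> A\<close>. Then \<open>f(\<theta>)^h\<close> is the sum of
  \<open>r(n) e^(i n \<theta>)\<close> over \<open>n \<in> [h, hN]\<close>, where the number \<open>r(n)\<close> of ordered \<open>h\<close>-tuples from \<open>A\<close>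
  with sum \<open>n\<close> is at most \<open>G = h! g\<close> and the \<open>r(n)\<close> add up to \<open>T = |A|^h\<close>. At
  \<open>\<theta> = 2\<pi>q/(hN)\<close> the bathtub principle applies: weights in \<open>[0, G]\<close> of total mass \<open>T\<close> give the
  largest cosine sum when packed where the cosine is largest, and comparing with a Riemann sum of
  \<open>max (cos t - cos \<sigma>) 0\<close> yields \<open>|f(\<theta>)|^h \<le> T sin \<sigma> / \<sigma> + O(G h)\<close> with \<open>\<sigma> = \<pi> T / (G h N)\<close>.

  In the other direction, \<open>cos u \<ge> (1 + c)/2 + (1 - c)/2 cos (h u)\<close> for \<open>|u| \<le> \<pi>/h\<close> and
  \<open>c = cos (\<pi>/h)\<close>; summed over the centred phases of the elements of \<open>A\<close> it gives
  \<open>|A| (1 + c)/2 \<le> |f(\<theta>)| + (1 - c)/2 |f(h \<theta>)|\<close> for \<open>\<theta> = 2\<pi>/(hN)\<close>, hence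
  \<open>(4/(3 - c) - 1) |A| \<le> max |f(\<theta>)| |f(h \<theta>)|\<close>. So \<open>(4/(3 - c) - 1)^h \<le> sin \<sigma> / \<sigma> + O(1/N)\<close>, and
  since \<open>sin t / t\<close> decreases on \<open>(0, \<pi>]\<close> and takes that value at \<open>x\<^sub>h\<close>, \<open>\<sigma> \<le> x\<^sub>h + o(1)\<close>.
\<close>

section \<open>The bathtub bound for cosine sums\<close>

definition cos_cap :: "real \<Rightarrow> real \<Rightarrow> real" where
  "cos_cap b t = max (cos t - cos b) 0"

lemma abs_cos_diff_le: "\<bar>cos t - cos s\<bar> \<le> \<bar>t - s\<bar>" for t s :: real
proof -
  have "\<bar>cos t - cos s\<bar> = 2 * \<bar>sin ((t + s) / 2)\<bar> * \<bar>sin ((s - t) / 2)\<bar>"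
    by (simp add: cos_diff_cos abs_mult)
  also have "\<dots> \<le> 2 * 1 * \<bar>(s - t) / 2\<bar>"
    by (intro mult_mono abs_sin_x_le_abs_x) auto
  finally show ?thesis by simp
qed

lemma cos_cap_nonneg: "0 \<le> cos_cap b t"
  by (simp add: cos_cap_def)

lemma cos_cap_le_2: "cos_cap b t \<le> 2"
  unfolding cos_cap_def using abs_cos_le_one[of t] abs_cos_le_one[of b] by linarith

lemma cos_cap_lipschitz: "\<bar>cos_cap b t - cos_cap b s\<bar> \<le> \<bar>t - s\<bar>"
  using abs_cos_diff_le[of t s] unfolding cos_cap_def by linarith

lemma cos_cap_integrable: "cos_cap b integrable_on {u..v}"
  unfolding cos_cap_def by (intro integrable_continuous_interval continuous_intros)

lemma cos_cap_add_2pi_int: "cos_cap b (t + 2 * pi * of_int m) = cos_cap b t"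
  by (simp add: cos_cap_def cos_add)

lemma cos_cap_add_2pi_nat: "cos_cap b (t + 2 * pi * real m) = cos_cap b t"
  using cos_cap_add_2pi_int[of b t "int m"] by simp

lemma cos_cap_on_period:
  assumes "0 \<le> b" "b \<le> pi" "\<bar>t\<bar> \<le> pi"
  shows "cos_cap b t = (if t \<in> {-b..b} then cos t - cos b else 0)"
proof -
  have "cos b \<le> cos \<bar>t\<bar> \<longleftrightarrow> \<bar>t\<bar> \<le> b"
    using assms by (intro cos_mono_le_eq) auto
  then show ?thesis by (auto simp: cos_cap_def)
qed

lemma integral_cos_cap_period:
  assumes "0 \<le> b" "b \<le> pi"
  shows "integral {-pi + 2 * pi * real m..pi + 2 * pi * real m} (cos_cap b) = 2 * (sin b - b * cos b)"
proof -
  have "integral {-pi + 2 * pi * real m..pi + 2 * pi * real m} (cos_cap b)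
      = integral {-pi..pi} (cos_cap b \<circ> (+) (2 * pi * real m))"
    by (rule integral_shift_Icc_real[symmetric])
  also have "\<dots> = integral {-pi..pi} (\<lambda>t. if t \<in> {-b..b} then cos t - cos b else 0)"
  proof (rule integral_cong)
    fix t assume "t \<in> {-pi..pi}"
    then show "(cos_cap b \<circ> (+) (2 * pi * real m)) t = (if t \<in> {-b..b} then cos t - cos b else 0)"
      using cos_cap_on_period[OF assms, of t] cos_cap_add_2pi_nat[of b t m] by (simp add: add.commute abs_le_iff)
  qed
  also have "\<dots> = integral {-b..b} (\<lambda>t. cos t - cos b)"
    by (subst Henstock_Kurzweil_Integration.integral_restrict_Int) (use assms in \<open>simp add: Int_absorb2\<close>)
  also have "\<dots> = (sin b - cos b * b) - (sin (-b) - cos b * (-b))"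
  proof (rule integral_unique, rule fundamental_theorem_of_calculus)
    show "- b \<le> b" using assms by simp
  qed (auto intro!: derivative_eq_intros simp: has_real_derivative_iff_has_vector_derivative[symmetric])
  finally show ?thesis by simp
qed

lemma integral_cos_cap_periods:
  assumes "0 \<le> b" "b \<le> pi"
  shows "integral {-pi..-pi + 2 * pi * real q} (cos_cap b) = real q * (2 * (sin b - b * cos b))"
proof (induction q)
  case (Suc q)
  have end_Suc: "-pi + 2 * pi * real (Suc q) = pi + 2 * pi * real q"
    by (simp add: algebra_simps)
  have "integral {-pi..pi + 2 * pi * real q} (cos_cap b)
      = integral {-pi..-pi + 2 * pi * real q} (cos_cap b)
        + integral {-pi + 2 * pi * real q..pi + 2 * pi * real q} (cos_cap b)"
    by (rule Henstock_Kurzweil_Integration.integral_combine[symmetric]) (auto intro: cos_cap_integrable)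
  then show ?case
    unfolding end_Suc using Suc integral_cos_cap_period[OF assms, of q] by (simp add: distrib_right)
qed simp

lemma integral_ge_of_lipschitz:
  fixes f :: "real \<Rightarrow> real"
  assumes "0 \<le> d" and f_int: "f integrable_on {c..c+d}"
    and lip: "\<And>t. t \<in> {c..c+d} \<Longrightarrow> \<bar>f t - f c\<bar> \<le> t - c"
  shows "d * f c - d^2 / 2 \<le> integral {c..c+d} f"
proof -
  have tent: "((\<lambda>t. f c - (t - c)) has_integral d * f c - d^2 / 2) {c..c+d}"
  proof -
    have "((\<lambda>t. f c - (t - c)) has_integral
        (f c * (c+d) - (c+d-c)^2/2) - (f c * c - (c-c)^2/2)) {c..c+d}"
      by (rule fundamental_theorem_of_calculus)
         (use assms(1) in \<open>auto intro!: derivative_eq_intros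
            simp: has_real_derivative_iff_has_vector_derivative[symmetric] field_simps\<close>)
    then show ?thesis by (simp add: algebra_simps)
  qed
  have "integral {c..c+d} (\<lambda>t. f c - (t - c)) \<le> integral {c..c+d} f"
  proof (rule integral_le)
    fix t assume "t \<in> {c..c+d}"
    then show "f c - (t - c) \<le> f t" using lip[of t] by linarith
  qed (use tent f_int in blast)+
  then show ?thesis using integral_unique[OF tent] by simp
qed

lemma sum_lessThan_shift_periodic:
  fixes f :: "nat \<Rightarrow> 'a::cancel_comm_monoid_add"
  assumes "\<And>n. f (n + K) = f n"
  shows "(\<Sum>n<K. f (n + j)) = (\<Sum>n<K. f n)"
proof (induction j)
  case (Suc j)
  have "(\<Sum>n<Suc K. f (n + j)) = f j + (\<Sum>n<K. f (n + Suc j))"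
    by (subst sum.lessThan_Suc_shift) simp
  moreover have "(\<Sum>n<Suc K. f (n + j)) = (\<Sum>n<K. f (n + j)) + f j"
    using assms[of j] by (simp add: add.commute)
  ultimately show ?case using Suc by (simp add: add.commute[of "f j"])
qed simp

lemma sum_cos_cap_progression_from_first_cell_le:
  assumes d: "0 < d" and Kd: "real K * d = 2 * pi * real q"
    and a: "-pi \<le> a" "a \<le> -pi + d" and b: "0 \<le> b" "b \<le> pi"
  shows "(\<Sum>n<K. cos_cap b (a + real n * d))
    \<le> (real q * (2 * (sin b - b * cos b)) + 2 * d) / d + real K * d / 2"
proof -
  define cell where "cell n = {a + real n * d..a + real (Suc n) * d}" for n
  have "d * cos_cap b (a + real n * d) - d^2 / 2 \<le> integral (cell n) (cos_cap b)" for n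
  proof -
    have "a + real (Suc n) * d = a + real n * d + d" by (simp add: algebra_simps)
    moreover have "d * cos_cap b (a + real n * d) - d^2 / 2
        \<le> integral {a + real n * d..a + real n * d + d} (cos_cap b)"
      using d by (intro integral_ge_of_lipschitz)
        (auto intro: cos_cap_integrable order_trans[OF cos_cap_lipschitz])
    ultimately show ?thesis by (simp only: cell_def)
  qed
  then have "(\<Sum>n<K. cos_cap b (a + real n * d)) \<le> (\<Sum>n<K. integral (cell n) (cos_cap b) / d + d / 2)"
    using d by (intro sum_mono) (simp add: field_simps power2_eq_square)
  also have "\<dots> = integral {a..a + real K * d} (cos_cap b) / d + real K * d / 2"
  proof -
    have "integral {a..a + real K * d} (cos_cap b) = (\<Sum>n<K. integral (cell n) (cos_cap b))"
    proof (induction K)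
      case (Suc K)
      have "integral {a..a + real (Suc K) * d} (cos_cap b)
          = integral {a..a + real K * d} (cos_cap b) + integral (cell K) (cos_cap b)"
        unfolding cell_def using d
        by (intro Henstock_Kurzweil_Integration.integral_combine[symmetric])
           (auto intro: cos_cap_integrable simp: algebra_simps)
      then show ?case using Suc by simp
    qed simp
    then show ?thesis by (simp add: sum.distrib sum_divide_distrib)
  qed
  also have "integral {a..a + real K * d} (cos_cap b) \<le> integral {-pi..-pi + 2 * pi * real q + d} (cos_cap b)"
    using a Kd by (intro integral_subset_le) (auto intro: cos_cap_integrable cos_cap_nonneg)
  also have "\<dots> = integral {-pi..-pi + 2 * pi * real q} (cos_cap b)
      + integral {-pi + 2 * pi * real q..-pi + 2 * pi * real q + d} (cos_cap b)"
    using d by (intro Henstock_Kurzweil_Integration.integral_combine[symmetric]) (auto intro: cos_cap_integrable)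
  also have "integral {-pi + 2 * pi * real q..-pi + 2 * pi * real q + d} (cos_cap b)
      \<le> integral {-pi + 2 * pi * real q..-pi + 2 * pi * real q + d} (\<lambda>_. 2)"
    by (intro integral_le) (auto intro: cos_cap_integrable cos_cap_le_2)
  also have "\<dots> = 2 * d" using d by simp
  finally show ?thesis using integral_cos_cap_periods[OF b, of q] d by (simp add: divide_right_mono)
qed

lemma sum_cos_cap_progression_le:
  assumes K: "0 < K" and q: "0 < q" and d: "d = 2 * pi * real q / real K"
    and b: "0 \<le> b" "b \<le> pi"
  shows "(\<Sum>n<K. cos_cap b (a + real n * d))
    \<le> real K * (2 * (sin b - b * cos b)) / (2 * pi) + 2 + pi * real q"
proof -
  have d_pos: "0 < d" and Kd: "real K * d = 2 * pi * real q"
    using K q d by simp_all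
  define p where "p = \<lfloor>(a + pi) / (2 * pi)\<rfloor>"
  define j where "j = nat \<lfloor>(a - 2 * pi * of_int p + pi) / d\<rfloor>"
  define a' where "a' = a - 2 * pi * of_int p - real j * d"
  \<comment> \<open>reduce the starting point modulo \<open>2\<pi>\<close> into \<open>[-\<pi>, \<pi>)\<close>, then step back \<open>j\<close> terms into the first cell\<close>
  have "-pi \<le> a - 2 * pi * of_int p" "a - 2 * pi * of_int p < pi"
    using floor_divide_lower[of "2 * pi" "a + pi"] floor_divide_upper[of "2 * pi" "a + pi"]
    by (auto simp: p_def algebra_simps)
  moreover from this have "real j = of_int \<lfloor>(a - 2 * pi * of_int p + pi) / d\<rfloor>"
    using d_pos by (simp add: j_def)
  ultimately have "real j * d \<le> a - 2 * pi * of_int p + pi" "a - 2 * pi * of_int p + pi < (real j + 1) * d"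
    using floor_divide_lower[OF d_pos, of "a - 2 * pi * of_int p + pi"]
      floor_divide_upper[OF d_pos, of "a - 2 * pi * of_int p + pi"]
    by auto
  then have a': "-pi \<le> a'" "a' \<le> -pi + d" by (auto simp: a'_def algebra_simps)
  define f where "f n = cos_cap b (a' + real n * d)" for n
  have "f (n + K) = f n" for n
    using cos_cap_add_2pi_nat[of b "a' + real n * d" q] Kd by (simp add: f_def algebra_simps)
  have "(\<Sum>n<K. cos_cap b (a + real n * d)) = (\<Sum>n<K. f (n + j))"
    using cos_cap_add_2pi_int[of b "a' + real (n + j) * d" p for n]
    by (intro sum.cong) (auto simp: f_def a'_def algebra_simps)
  also have "\<dots> = (\<Sum>n<K. f n)"
    by (rule sum_lessThan_shift_periodic) fact
  also have "\<dots> \<le> (real q * (2 * (sin b - b * cos b)) + 2 * d) / d + real K * d / 2"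
    unfolding f_def by (rule sum_cos_cap_progression_from_first_cell_le[OF d_pos Kd a' b])
  also have "\<dots> = real K * (2 * (sin b - b * cos b)) / (2 * pi) + 2 + pi * real q"
    using K q d_pos unfolding d by (simp add: field_simps)
  finally show ?thesis .
qed

lemma bathtub_weighted_cos_sum_le:
  assumes S: "finite S" "S \<subseteq> {c..<c+K}" and K: "0 < K" and q: "0 < q"
    and d: "d = 2 * pi * real q / real K" and b: "0 \<le> b" "b \<le> pi"
    and G: "0 \<le> G" and r: "\<And>n. n \<in> S \<Longrightarrow> 0 \<le> r n \<and> r n \<le> G"
  shows "(\<Sum>n\<in>S. r n * cos (real n * d - \<phi>))
    \<le> G * (real K * (2 * (sin b - b * cos b)) / (2 * pi) + 2 + pi * real q) + cos b * (\<Sum>n\<in>S. r n)"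
proof -
  have "r n * cos (real n * d - \<phi>) \<le> G * cos_cap b (real n * d - \<phi>) + cos b * r n" if "n \<in> S" for n
  proof -
    have "r n * (cos (real n * d - \<phi>) - cos b) \<le> r n * cos_cap b (real n * d - \<phi>)"
      using r[OF that] by (intro mult_left_mono) (auto simp: cos_cap_def)
    also have "\<dots> \<le> G * cos_cap b (real n * d - \<phi>)"
      using r[OF that] by (intro mult_right_mono cos_cap_nonneg) auto
    finally show ?thesis by (simp add: algebra_simps)
  qed
  then have "(\<Sum>n\<in>S. r n * cos (real n * d - \<phi>))
      \<le> G * (\<Sum>n\<in>S. cos_cap b (real n * d - \<phi>)) + cos b * (\<Sum>n\<in>S. r n)"
    by (subst sum_distrib_left)+ (auto simp: sum.distrib[symmetric] intro: sum_mono)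
  also have "(\<Sum>n\<in>S. cos_cap b (real n * d - \<phi>)) \<le> (\<Sum>n\<in>{c..<c+K}. cos_cap b (real n * d - \<phi>))"
    using S by (intro sum_mono2) (auto intro: cos_cap_nonneg)
  also have "\<dots> = (\<Sum>n<K. cos_cap b ((real c * d - \<phi>) + real n * d))"
    by (subst sum.atLeastLessThan_shift_0) (simp add: lessThan_atLeast0 algebra_simps)
  also have "\<dots> \<le> real K * (2 * (sin b - b * cos b)) / (2 * pi) + 2 + pi * real q"
    by (rule sum_cos_cap_progression_le[OF K q d b])
  finally show ?thesis
    using G by (simp add: mult_left_mono)
qed

section \<open>A cosine inequality and the decrease of sin t / t\<close>

definition dirichlet_kernel :: "nat \<Rightarrow> real \<Rightarrow> real" where
  "dirichlet_kernel h s = (\<Sum>k<h. cos ((real h - 1 - 2 * real k) * s))"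

lemma sin_mult_eq_dirichlet_kernel: "sin (real h * s) = sin s * dirichlet_kernel h s"
proof -
  define f where "f k = sin ((real h - 2 * real k) * s)" for k
  have telescope: "2 * sin s * cos ((real h - 1 - 2 * real k) * s) = f k - f (Suc k)" for k
  proof -
    have "2 * sin s * cos ((real h - 1 - 2 * real k) * s)
        = sin (s + (real h - 1 - 2 * real k) * s) + sin (s - (real h - 1 - 2 * real k) * s)"
      using sin_times_cos[of s "(real h - 1 - 2 * real k) * s"] by (simp add: field_simps)
    moreover have "s + (real h - 1 - 2 * real k) * s = (real h - 2 * real k) * s"
      and "s - (real h - 1 - 2 * real k) * s = - ((real h - 2 * real (Suc k)) * s)"
      by (simp_all add: algebra_simps)
    ultimately show ?thesis by (simp add: f_def)
  qed
  have "2 * (sin s * dirichlet_kernel h s) = (\<Sum>k<h. f k - f (Suc k))"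
    unfolding dirichlet_kernel_def by (simp add: sum_distrib_left telescope mult.assoc[symmetric])
  also have "\<dots> = f 0 - f h" by (rule sum_lessThan_telescope')
  also have "\<dots> = 2 * sin (real h * s)" by (simp add: f_def algebra_simps)
  finally show ?thesis by simp
qed

lemma dirichlet_kernel_antimono:
  assumes "0 \<le> s" "s \<le> t" "t \<le> pi / real h"
  shows "dirichlet_kernel h t \<le> dirichlet_kernel h s"
  unfolding dirichlet_kernel_def
proof (rule sum_mono)
  fix k assume "k \<in> {..<h}"
  then have m: "\<bar>real h - 1 - 2 * real k\<bar> \<le> real h" by (auto simp: abs_if)
  define m where "m = \<bar>real h - 1 - 2 * real k\<bar>"
  have "m * t \<le> real h * (pi / real h)"
    using assms m by (intro mult_mono) (auto simp: m_def)
  also have "\<dots> \<le> pi" by (cases "h = 0") auto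
  finally have "m * t \<le> pi" .
  moreover have "m * s \<le> m * t" using assms by (intro mult_left_mono) (auto simp: m_def)
  ultimately have cos_le: "cos (m * t) \<le> cos (m * s)"
    using assms by (subst cos_mono_le_eq) (auto simp: m_def)
  have cos_abs_factor: "cos (x * y) = cos (\<bar>x\<bar> * y)" for x y :: real
    by (cases "x < 0") auto
  show "cos ((real h - 1 - 2 * real k) * t) \<le> cos ((real h - 1 - 2 * real k) * s)"
    using cos_le unfolding cos_abs_factor[of "real h - 1 - 2 * real k"] m_def .
qed

lemma sin_le_sin_mult:
  assumes h: "1 \<le> h" and s: "0 \<le> s" "s \<le> pi / (2 * real h)"
  shows "sin s \<le> sin (pi / (2 * real h)) * sin (real h * s)"
proof -
  define a where "a = pi / (2 * real h)"
  have a: "0 < a" "a \<le> pi / 2" "s \<le> a" using h s by (auto simp: a_def field_simps)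
  have kernel_a: "sin a * dirichlet_kernel h a = 1"
    using h sin_mult_eq_dirichlet_kernel[of h a] by (simp add: a_def)
  have kernel_mono: "dirichlet_kernel h a \<le> dirichlet_kernel h s"
    using s h by (intro dirichlet_kernel_antimono) (auto simp: a_def field_simps)
  have "0 \<le> sin s" "0 < sin a"
    using s(1) a by (auto intro!: sin_ge_zero sin_gt_zero)
  have "sin s = sin a * (sin s * dirichlet_kernel h a)"
    using kernel_a by (simp add: ac_simps)
  also have "\<dots> \<le> sin a * (sin s * dirichlet_kernel h s)"
    using kernel_mono \<open>0 \<le> sin s\<close> \<open>0 < sin a\<close> by (intro mult_left_mono) auto
  also have "\<dots> = sin a * sin (real h * s)"
    by (simp add: sin_mult_eq_dirichlet_kernel)
  finally show ?thesis by (simp add: a_def)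
qed

lemma cos_ge_affine_cos_mult:
  assumes h: "1 \<le> h" and u: "\<bar>u\<bar> \<le> pi / real h"
  shows "(1 + cos (pi / real h)) / 2 + (1 - cos (pi / real h)) / 2 * cos (real h * u) \<le> cos u"
proof -
  define s where "s = \<bar>u\<bar> / 2"
  define a where "a = pi / (2 * real h)"
  have s: "0 \<le> s" "s \<le> a" using u by (auto simp: s_def a_def)
  have "a \<le> pi" using h by (simp add: a_def divide_le_eq mult_le_cancel_left1)
  then have "0 \<le> sin s"
    using s by (intro sin_ge_zero) auto
  then have "sin s ^ 2 \<le> (sin a * sin (real h * s)) ^ 2"
    using sin_le_sin_mult[OF h s(1)] s(2) by (intro power_mono) (auto simp: a_def)
  then have sin_sq: "sin s ^ 2 \<le> sin a ^ 2 * sin (real h * s) ^ 2"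
    by (simp add: power_mult_distrib)
  have cos_u: "cos u = 1 - 2 * sin s ^ 2"
    using cos_double_sin[of s] by (simp add: s_def)
  have cos_hu: "cos (real h * u) = 1 - 2 * sin (real h * s) ^ 2"
    using cos_double_sin[of "real h * s"] cos_abs_real[of "real h * u"] by (simp add: s_def abs_mult)
  have cos_c: "cos (pi / real h) = 1 - 2 * sin a ^ 2"
    using cos_double_sin[of a] h by (simp add: a_def)
  have affine: "(1 + (1 - 2 * x)) / 2 + (1 - (1 - 2 * x)) / 2 * (1 - 2 * y) = 1 - 2 * (x * y)" for x y :: real
    by (simp add: field_simps)
  show ?thesis
    unfolding cos_u cos_hu cos_c affine using sin_sq by linarith
qed

lemma mult_cos_lt_sin:
  fixes t :: real assumes "0 < t" "t \<le> pi"
  shows "t * cos t < sin t"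
proof -
  have "(\<lambda>y. sin y - y * cos y) 0 < (\<lambda>y. sin y - y * cos y) t"
  proof (rule DERIV_pos_imp_increasing_open[OF assms(1)])
    fix y :: real assume y: "0 < y" "y < t"
    have "DERIV (\<lambda>y. sin y - y * cos y) y :> y * sin y"
      by (auto intro!: derivative_eq_intros simp: algebra_simps)
    moreover have "0 < y * sin y"
      using y assms by (intro mult_pos_pos sin_gt_zero) auto
    ultimately show "\<exists>z. DERIV (\<lambda>y. sin y - y * cos y) y :> z \<and> z > 0" by blast
  qed (intro continuous_intros)
  then show ?thesis by simp
qed

lemma sinc_strict_antimono:
  fixes s t :: real assumes "0 < s" "s < t" "t \<le> pi"
  shows "sin t / t < sin s / s"
proof -
  have "(\<lambda>y. sin y / y) t < (\<lambda>y. sin y / y) s"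
  proof (rule DERIV_neg_imp_decreasing[OF assms(2)])
    fix y :: real assume y: "s \<le> y" "y \<le> t"
    then have "0 < y" "y \<le> pi" using assms by auto
    then have "DERIV (\<lambda>y. sin y / y) y :> (cos y * y - sin y) / (y * y)"
      and "(cos y * y - sin y) / (y * y) < 0"
      using mult_cos_lt_sin
      by (auto intro!: derivative_eq_intros divide_neg_pos simp: power2_eq_square algebra_simps)
    then show "\<exists>z. DERIV (\<lambda>y. sin y / y) y :> z \<and> z < 0" by blast
  qed
  then show ?thesis by simp
qed

section \<open>Exponential sums of \<open>B\<^sub>h[g]\<close>-sets\<close>

definition tuples :: "'a set \<Rightarrow> nat \<Rightarrow> 'a list set" where
  "tuples A h = {xs. set xs \<subseteq> A \<and> length xs = h}"

definition ordered_rep_count :: "nat \<Rightarrow> nat set \<Rightarrow> nat \<Rightarrow> nat" where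
  "ordered_rep_count h A n = card {xs \<in> tuples A h. sum_list xs = n}"

definition exp_sum :: "nat set \<Rightarrow> real \<Rightarrow> complex" where
  "exp_sum A \<theta> = (\<Sum>a\<in>A. cis (real a * \<theta>))"

lemma finite_tuples: "finite A \<Longrightarrow> finite (tuples A h)"
  unfolding tuples_def by (rule finite_lists_length_eq)

lemma card_tuples: "finite A \<Longrightarrow> card (tuples A h) = card A ^ h"
  unfolding tuples_def by (rule card_lists_length_eq)

lemma tuples_Suc: "tuples A (Suc h) = (\<lambda>(a, xs). a # xs) ` (A \<times> tuples A h)"
proof
  show "tuples A (Suc h) \<subseteq> (\<lambda>(a, xs). a # xs) ` (A \<times> tuples A h)"
  proof
    fix ys assume "ys \<in> tuples A (Suc h)"
    then obtain a xs where "ys = a # xs" "length xs = h" "set ys \<subseteq> A"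
      by (auto simp: tuples_def length_Suc_conv)
    then show "ys \<in> (\<lambda>(a, xs). a # xs) ` (A \<times> tuples A h)" by (force simp: tuples_def)
  qed
qed (auto simp: tuples_def)

lemma card_permutations_of_multiset_le: "card (permutations_of_multiset M) \<le> fact (size M)"
proof -
  have "0 < (\<Prod>x\<in>set_mset M. fact (count M x) :: nat)"
    by (intro prod_pos) simp
  then show ?thesis
    using card_permutations_of_multiset_aux[of M] by (metis dvd_imp_le dvd_triv_left fact_gt_zero)
qed

lemma mset_image_tuples:
  "mset ` {xs \<in> tuples A h. sum_list xs = n}
    = {M. size M = h \<and> set_mset M \<subseteq> A \<and> sum_mset M = n}"
proof
  show "{M. size M = h \<and> set_mset M \<subseteq> A \<and> sum_mset M = n} \<subseteq> mset ` {xs \<in> tuples A h. sum_list xs = n}"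
  proof
    fix M assume "M \<in> {M. size M = h \<and> set_mset M \<subseteq> A \<and> sum_mset M = n}"
    moreover obtain xs where "mset xs = M" using ex_mset by blast
    ultimately show "M \<in> mset ` {xs \<in> tuples A h. sum_list xs = n}"
      by (auto simp: tuples_def sum_mset_sum_list[symmetric])
  qed
qed (auto simp: tuples_def sum_mset_sum_list)

lemma ordered_rep_count_le:
  assumes "finite A" and "Bhg_set h g A"
  shows "ordered_rep_count h A n \<le> fact h * g"
proof -
  define X where "X = {xs \<in> tuples A h. sum_list xs = n}"
  have "finite X" using finite_tuples[OF assms(1)] by (simp add: X_def)
  have "X \<subseteq> (\<Union>M\<in>mset ` X. permutations_of_multiset M)"
    by (auto simp: permutations_of_multiset_def)
  then have "card X \<le> (\<Sum>M\<in>mset ` X. card (permutations_of_multiset M))"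
    using \<open>finite X\<close> by (intro order_trans[OF card_mono card_UN_le]) auto
  also have "\<dots> \<le> (\<Sum>M\<in>mset ` X. fact h)"
  proof (rule sum_mono)
    fix M assume "M \<in> mset ` X"
    then have "size M = h" by (auto simp: X_def tuples_def)
    then show "card (permutations_of_multiset M) \<le> fact h"
      using card_permutations_of_multiset_le[of M] by simp
  qed
  also have "\<dots> = rep_count h A n * fact h"
    by (simp add: X_def rep_count_def mset_image_tuples)
  also have "\<dots> \<le> g * fact h"
    using assms(2) by (simp add: Bhg_set_def)
  finally show ?thesis by (simp add: ordered_rep_count_def X_def mult.commute)
qed

lemma exp_sum_power: "finite A \<Longrightarrow> exp_sum A \<theta> ^ h = (\<Sum>xs\<in>tuples A h. cis (real (sum_list xs) * \<theta>))"
proof (induction h)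
  case 0
  have "tuples A 0 = {[]}" by (auto simp: tuples_def)
  then show ?case by simp
next
  case (Suc h)
  have inj: "inj_on (\<lambda>(a, xs). a # xs) (A \<times> tuples A h)" by (auto simp: inj_on_def)
  have "(\<Sum>xs\<in>tuples A (Suc h). cis (real (sum_list xs) * \<theta>))
      = (\<Sum>(a, xs)\<in>A \<times> tuples A h. cis (real a * \<theta>) * cis (real (sum_list xs) * \<theta>))"
    unfolding tuples_Suc by (subst sum.reindex[OF inj]) (simp add: case_prod_unfold cis_mult distrib_right)
  also have "\<dots> = exp_sum A \<theta> * (\<Sum>xs\<in>tuples A h. cis (real (sum_list xs) * \<theta>))"
    by (simp add: exp_sum_def sum_product sum.cartesian_product)
  finally show ?case using Suc by simp
qed

lemma sum_tuples_by_sum_list: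
  fixes w :: "nat \<Rightarrow> 'a::comm_ring_1"
  assumes "finite A" "A \<subseteq> {1..N}"
  shows "(\<Sum>xs\<in>tuples A h. w (sum_list xs)) = (\<Sum>n\<in>{h..h*N}. of_nat (ordered_rep_count h A n) * w n)"
proof -
  have "length xs \<le> sum_list xs \<and> sum_list xs \<le> length xs * N" if "set xs \<subseteq> {1..N}" for xs
    using that by (induction xs) auto
  then have "sum_list ` tuples A h \<subseteq> {h..h*N}"
    using assms(2) by (force simp: tuples_def mult.commute)
  then show ?thesis
    by (subst sum.group[symmetric, OF finite_tuples[OF assms(1)]]) (auto simp: ordered_rep_count_def)
qed

lemma sum_ordered_rep_count:
  assumes "finite A" "A \<subseteq> {1..N}"
  shows "(\<Sum>n\<in>{h..h*N}. real (ordered_rep_count h A n)) = real (card A) ^ h"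
  using sum_tuples_by_sum_list[OF assms, where h = h and w = "\<lambda>_. 1::real"] by (simp add: card_tuples[OF assms(1)])

lemma card_power_le_Bhg:
  assumes "finite A" "A \<subseteq> {1..N}" "1 \<le> h" "Bhg_set h g A"
  shows "real (card A) ^ h \<le> fact h * real g * real (h * N)"
proof -
  have "real (card A) ^ h = (\<Sum>n\<in>{h..h*N}. real (ordered_rep_count h A n))"
    using sum_ordered_rep_count[OF assms(1,2)] by simp
  also have "\<dots> \<le> (\<Sum>n\<in>{h..h*N}. fact h * real g)"
    using ordered_rep_count_le[OF assms(1,4)] by (intro sum_mono) (metis of_nat_fact of_nat_le_iff of_nat_mult)
  also have "\<dots> = fact h * real g * real (h * N + 1 - h)" by simp
  also have "\<dots> \<le> fact h * real g * real (h * N)"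
    using assms(3) by (intro mult_left_mono) (simp_all only: of_nat_le_iff, auto)
  finally show ?thesis .
qed

lemma norm_exp_sum_power_eq:
  assumes "finite A" "A \<subseteq> {1..N}"
  obtains \<phi> where "cmod (exp_sum A \<theta>) ^ h = (\<Sum>n\<in>{h..h*N}. real (ordered_rep_count h A n) * cos (real n * \<theta> - \<phi>))"
proof
  define z where "z = exp_sum A \<theta> ^ h"
  define \<phi> where "\<phi> = Arg z"
  have z: "z = (\<Sum>n\<in>{h..h*N}. of_nat (ordered_rep_count h A n) * cis (real n * \<theta>))"
    unfolding z_def exp_sum_power[OF assms(1)] by (rule sum_tuples_by_sum_list[OF assms])
  have "Re (z * cis (- \<phi>)) = (\<Sum>n\<in>{h..h*N}. real (ordered_rep_count h A n) * cos (real n * \<theta> - \<phi>))"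
    unfolding z sum_distrib_right Re_sum by (intro sum.cong refl) (simp add: mult.assoc cis_mult)
  moreover have "z * cis (- \<phi>) = of_real (cmod z)"
    unfolding \<phi>_def by (subst rcis_cmod_Arg[symmetric]) (simp add: rcis_def mult.assoc cis_mult)
  ultimately have "cmod z = (\<Sum>n\<in>{h..h*N}. real (ordered_rep_count h A n) * cos (real n * \<theta> - \<phi>))"
    by (metis Re_complex_of_real)
  then show "cmod (exp_sum A \<theta>) ^ h = (\<Sum>n\<in>{h..h*N}. real (ordered_rep_count h A n) * cos (real n * \<theta> - \<phi>))"
    by (simp add: z_def norm_power)
qed

lemma bathtub_bound_sinc_form:
  fixes G K T :: real
  assumes "0 < G" "0 < K" "0 < T"
  defines "\<sigma> \<equiv> pi * T / (G * K)"
  shows "G * (K * (2 * (sin \<sigma> - \<sigma> * cos \<sigma>)) / (2 * pi)) + cos \<sigma> * T = T * sin \<sigma> / \<sigma>"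
proof -
  have GK: "G * K = pi * T / \<sigma>" using assms by (simp add: \<sigma>_def field_simps)
  have "G * (K * (2 * (sin \<sigma> - \<sigma> * cos \<sigma>)) / (2 * pi)) = (G * K) * (sin \<sigma> - \<sigma> * cos \<sigma>) / pi"
    by (simp add: field_simps)
  also have "\<dots> = T * sin \<sigma> / \<sigma> - T * cos \<sigma>"
    unfolding GK using assms by (simp add: \<sigma>_def field_simps)
  finally show ?thesis by simp
qed

lemma norm_exp_sum_power_le_sinc:
  assumes A: "finite A" "A \<subseteq> {1..N}" "A \<noteq> {}" and h: "1 \<le> h" and g: "1 \<le> g"
    and B: "Bhg_set h g A" and q: "0 < q" "q \<le> h"
  defines "G \<equiv> fact h * real g" and "T \<equiv> real (card A) ^ h"
  defines "\<sigma> \<equiv> pi * T / (G * real (h * N))"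
  shows "0 < \<sigma> \<and> \<sigma> \<le> pi \<and>
    cmod (exp_sum A (2 * pi * real q / real (h * N))) ^ h \<le> T * sin \<sigma> / \<sigma> + G * (2 + pi * real h)"
proof -
  obtain a where "a \<in> A" using A(3) by blast
  then have "1 \<le> N" using A(2) by auto
  then have hN: "0 < h * N" using h by simp
  have G: "0 < G" and T: "0 < T" using g A by (simp_all add: G_def T_def card_gt_0_iff)
  have "T \<le> G * real (h * N)"
    using card_power_le_Bhg[OF A(1,2) h B] by (simp add: G_def T_def)
  then have \<sigma>: "0 < \<sigma>" "\<sigma> \<le> pi"
    using G T hN by (simp_all add: \<sigma>_def divide_le_eq mult.commute mult_left_mono)
  have r: "0 \<le> real (ordered_rep_count h A n) \<and> real (ordered_rep_count h A n) \<le> G" for n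
    using ordered_rep_count_le[OF A(1) B, of n] unfolding G_def
    by (metis of_nat_0_le_iff of_nat_fact of_nat_le_iff of_nat_mult)
  obtain \<phi> where "cmod (exp_sum A (2 * pi * real q / real (h * N))) ^ h
      = (\<Sum>n\<in>{h..h*N}. real (ordered_rep_count h A n) * cos (real n * (2 * pi * real q / real (h * N)) - \<phi>))"
    using norm_exp_sum_power_eq[OF A(1,2)] .
  also have "\<dots> \<le> G * (real (h * N) * (2 * (sin \<sigma> - \<sigma> * cos \<sigma>)) / (2 * pi) + 2 + pi * real q)
      + cos \<sigma> * (\<Sum>n\<in>{h..h*N}. real (ordered_rep_count h A n))"
    using hN q \<sigma> G r by (intro bathtub_weighted_cos_sum_le[where c = h and K = "h * N"]) auto
  also have "\<dots> = T * sin \<sigma> / \<sigma> + G * (2 + pi * real q)"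
    using bathtub_bound_sinc_form[OF G _ T, of "real (h * N)"] hN
    unfolding sum_ordered_rep_count[OF A(1,2)] \<sigma>_def[symmetric] by (simp add: T_def algebra_simps)
  also have "\<dots> \<le> T * sin \<sigma> / \<sigma> + G * (2 + pi * real h)"
    using q G by (simp add: mult_left_mono)
  finally show ?thesis using \<sigma> by blast
qed

lemma abs_centered_phase_le:
  assumes "a \<in> {1..N}" "1 \<le> h"
  shows "\<bar>real a * (2 * pi / real (h * N)) - pi * (real N + 1) / real (h * N)\<bar> \<le> pi / real h"
proof -
  have hN: "0 < real h" "0 < real N" using assms by auto
  have "\<bar>real a * (2 * pi / real (h * N)) - pi * (real N + 1) / real (h * N)\<bar>
      = pi * \<bar>2 * real a - real N - 1\<bar> / (real h * real N)"
  proof -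
    have "real a * (2 * pi / real (h * N)) - pi * (real N + 1) / real (h * N)
        = pi * (2 * real a - real N - 1) / (real h * real N)"
      using hN by (simp add: field_simps)
    then show ?thesis using hN by (simp add: abs_mult abs_divide)
  qed
  also have "\<dots> \<le> pi * real N / (real h * real N)"
    using assms hN by (intro divide_right_mono mult_left_mono) auto
  also have "\<dots> = pi / real h" using hN by simp
  finally show ?thesis .
qed

lemma re_exp_sum_rotate: "Re (exp_sum A \<theta> * cis (- \<phi>)) = (\<Sum>a\<in>A. cos (real a * \<theta> - \<phi>))"
  unfolding exp_sum_def sum_distrib_right Re_sum by (intro sum.cong refl) (simp add: cis_mult)

lemma card_le_norm_exp_sum_combination:
  assumes A: "finite A" "A \<subseteq> {1..N}" and h: "1 \<le> h"
  defines "c \<equiv> cos (pi / real h)"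
  shows "real (card A) * ((1 + c) / 2)
    \<le> cmod (exp_sum A (2 * pi / real (h * N))) + (1 - c) / 2 * cmod (exp_sum A (2 * pi * real h / real (h * N)))"
proof -
  define \<theta> where "\<theta> = 2 * pi / real (h * N)"
  define \<phi> where "\<phi> = pi * (real N + 1) / real (h * N)"
  have h\<theta>: "2 * pi * real h / real (h * N) = real h * \<theta>" by (simp add: \<theta>_def)
  have "real (card A) * ((1 + c) / 2) + (1 - c) / 2 * Re (exp_sum A (real h * \<theta>) * cis (- (real h * \<phi>)))
      = (\<Sum>a\<in>A. (1 + c) / 2 + (1 - c) / 2 * cos (real a * (real h * \<theta>) - real h * \<phi>))"
    unfolding re_exp_sum_rotate by (simp add: sum.distrib sum_distrib_left)
  also have "\<dots> \<le> (\<Sum>a\<in>A. cos (real a * \<theta> - \<phi>))"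
  proof (rule sum_mono)
    fix a assume "a \<in> A"
    then have "\<bar>real a * \<theta> - \<phi>\<bar> \<le> pi / real h"
      using A(2) h abs_centered_phase_le by (auto simp: \<theta>_def \<phi>_def)
    moreover have "real a * (real h * \<theta>) - real h * \<phi> = real h * (real a * \<theta> - \<phi>)"
      by (simp add: algebra_simps)
    ultimately show "(1 + c) / 2 + (1 - c) / 2 * cos (real a * (real h * \<theta>) - real h * \<phi>) \<le> cos (real a * \<theta> - \<phi>)"
      unfolding c_def using cos_ge_affine_cos_mult[OF h] by simp
  qed
  also have "\<dots> = Re (exp_sum A \<theta> * cis (- \<phi>))" by (rule re_exp_sum_rotate[symmetric])
  also have "\<dots> \<le> cmod (exp_sum A \<theta>)"
    using complex_Re_le_cmod[of "exp_sum A \<theta> * cis (- \<phi>)"] by (simp add: norm_mult)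
  finally have "real (card A) * ((1 + c) / 2) + (1 - c) / 2 * Re (exp_sum A (real h * \<theta>) * cis (- (real h * \<phi>)))
      \<le> cmod (exp_sum A \<theta>)" .
  moreover have "- cmod (exp_sum A (real h * \<theta>)) \<le> Re (exp_sum A (real h * \<theta>) * cis (- (real h * \<phi>)))"
    using abs_Re_le_cmod[of "exp_sum A (real h * \<theta>) * cis (- (real h * \<phi>))"] by (simp add: norm_mult)
  then have "(1 - c) / 2 * - cmod (exp_sum A (real h * \<theta>))
      \<le> (1 - c) / 2 * Re (exp_sum A (real h * \<theta>) * cis (- (real h * \<phi>)))"
    by (intro mult_left_mono) (simp_all add: c_def)
  ultimately show ?thesis
    unfolding h\<theta> \<theta>_def[symmetric] by linarith
qed

lemma card_power_le_sinc:
  assumes A: "finite A" "A \<subseteq> {1..N}" "A \<noteq> {}" and h: "2 \<le> h" and g: "1 \<le> g"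
    and B: "Bhg_set h g A"
  defines "G \<equiv> fact h * real g" and "T \<equiv> real (card A) ^ h"
  defines "\<sigma> \<equiv> pi * T / (G * real (h * N))"
  shows "0 < \<sigma> \<and> \<sigma> \<le> pi \<and>
    T * (4 / (3 - cos (pi / real h)) - 1) ^ h \<le> T * sin \<sigma> / \<sigma> + G * (2 + pi * real h)"
proof -
  define c where "c = cos (pi / real h)"
  define X where "X = cmod (exp_sum A (2 * pi / real (h * N)))"
  define Y where "Y = cmod (exp_sum A (2 * pi * real h / real (h * N)))"
  have X: "0 < \<sigma> \<and> \<sigma> \<le> pi \<and> X ^ h \<le> T * sin \<sigma> / \<sigma> + G * (2 + pi * real h)"
    using norm_exp_sum_power_le_sinc[OF A _ g B, of 1] h by (simp add: X_def G_def T_def \<sigma>_def)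
  have Y: "Y ^ h \<le> T * sin \<sigma> / \<sigma> + G * (2 + pi * real h)"
    using norm_exp_sum_power_le_sinc[OF A _ g B, of h] h by (simp add: Y_def G_def T_def \<sigma>_def)
  have "pi / real h \<le> pi / 2"
    using h by (intro divide_left_mono) auto
  moreover have "0 \<le> pi / real h" by simp
  ultimately have c: "0 \<le> c" "c \<le> 1"
    unfolding c_def by (intro cos_ge_zero, linarith+) simp
  have "real (card A) * ((1 + c) / 2) \<le> X + (1 - c) / 2 * Y"
    using card_le_norm_exp_sum_combination[OF A(1,2)] h by (simp add: X_def Y_def c_def)
  also have "\<dots> \<le> max X Y + (1 - c) / 2 * max X Y"
    using c by (intro add_mono mult_left_mono) auto
  also have "\<dots> = max X Y * ((3 - c) / 2)"
    by (simp add: field_simps)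
  finally have "real (card A) * (4 / (3 - c) - 1) \<le> max X Y"
    using c by (simp add: field_simps)
  then have "T * (4 / (3 - c) - 1) ^ h \<le> max X Y ^ h"
    using c unfolding T_def power_mult_distrib[symmetric] by (intro power_mono) (simp_all add: field_simps)
  also have "\<dots> \<le> T * sin \<sigma> / \<sigma> + G * (2 + pi * real h)"
    using X Y by (simp add: max_def)
  finally show ?thesis using X by (simp add: c_def)
qed

lemma Bhg_large_card_imp_bounded:
  assumes A: "A \<subseteq> {1..N}" "Bhg_set h g A" and h: "2 \<le> h" and g: "1 \<le> g"
    and x: "0 < x" "sin x / x = (4 / (3 - cos (pi / real h)) - 1) ^ h" and "x < y"
    and large: "y * (fact h * real g) * real h * real N / pi < real (card A) ^ h"
  shows "y < pi \<and>
    real N * (y * (fact h * real g) * real h / pi) * (sin x / x - sin y / y) < fact h * real g * (2 + pi * real h)"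
proof -
  define G where "G = fact h * real g"
  define T where "T = real (card A) ^ h"
  define \<sigma> where "\<sigma> = pi * T / (G * real (h * N))"
  have "finite A" using A(1) finite_subset by blast
  have G: "0 < G" using g by (simp add: G_def)
  have "0 \<le> y * (fact h * real g) * real h * real N / pi"
    using x \<open>x < y\<close> by simp
  then have "0 < T" using large unfolding T_def by linarith
  then have "A \<noteq> {}" using h by (auto simp: T_def)
  then have N: "0 < N" using A(1) by fastforce
  have "y * (G * real (h * N)) < pi * T"
    using large by (simp add: G_def T_def divide_less_eq ac_simps)
  then have "y < \<sigma>"
    using G N h by (simp add: \<sigma>_def less_divide_eq)
  moreover have \<sigma>: "0 < \<sigma>" "\<sigma> \<le> pi" and
    key: "T * (sin x / x) \<le> T * sin \<sigma> / \<sigma> + G * (2 + pi * real h)"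
    using card_power_le_sinc[OF \<open>finite A\<close> A(1) \<open>A \<noteq> {}\<close> h g A(2)] x(2)
    by (simp_all add: G_def T_def \<sigma>_def)
  ultimately have "y < pi" using \<open>x < y\<close> by linarith
  have "sin \<sigma> / \<sigma> < sin y / y" "sin y / y < sin x / x"
    using sinc_strict_antimono[of y \<sigma>] sinc_strict_antimono[OF x(1) \<open>x < y\<close>]
      \<open>y < \<sigma>\<close> \<sigma> \<open>x < y\<close> \<open>y < pi\<close> x(1) by auto
  have "real N * (y * G * real h / pi) * (sin x / x - sin y / y) < T * (sin x / x - sin y / y)"
    using large \<open>sin y / y < sin x / x\<close> by (intro mult_strict_right_mono) (simp_all add: G_def T_def ac_simps)
  also have "\<dots> \<le> T * (sin x / x - sin \<sigma> / \<sigma>)"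
    using \<open>0 < T\<close> \<open>sin \<sigma> / \<sigma> < sin y / y\<close> by (intro mult_left_mono) auto
  also have "\<dots> \<le> G * (2 + pi * real h)"
    using key by (simp add: right_diff_distrib)
  finally show ?thesis using \<open>y < pi\<close> by (simp add: G_def)
qed

theorem theorem1p1:
  fixes h g :: nat and x :: real
  assumes "g \<ge> 2" and "h \<ge> 4"
    and "0 < x" and "x < pi"
    and "sin x / x = (4 / (3 - cos (pi / real h)) - 1) ^ h"
  shows "\<forall>\<epsilon>>0. \<exists>N0. \<forall>N\<ge>N0. \<forall>A. A \<subseteq> {1..N} \<and> Bhg_set h g A \<longrightarrow>
           real (card A) \<le> (1 + \<epsilon>) * root h (x * fact h * real h * real g * real N / pi)"
proof (intro allI impI)
  fix \<epsilon> :: real assume "0 < \<epsilon>"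
  define y where "y = (1 + \<epsilon>) ^ h * x"
  define C where "C = y * (fact h * real g) * real h / pi * (sin x / x - sin y / y)"
  define E where "E = fact h * real g * (2 + pi * real h)"
  have "x < y" using \<open>0 < \<epsilon>\<close> assms by (simp add: y_def one_less_power)
  show "\<exists>N0. \<forall>N\<ge>N0. \<forall>A. A \<subseteq> {1..N} \<and> Bhg_set h g A \<longrightarrow>
      real (card A) \<le> (1 + \<epsilon>) * root h (x * fact h * real h * real g * real N / pi)"
  proof (intro exI[of _ "nat \<lceil>E / C\<rceil>"] allI impI, elim conjE, rule ccontr)
    fix N A assume "nat \<lceil>E / C\<rceil> \<le> N" "A \<subseteq> {1..N}" "Bhg_set h g A"
      and "\<not> real (card A) \<le> (1 + \<epsilon>) * root h (x * fact h * real h * real g * real N / pi)"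
    then have "((1 + \<epsilon>) * root h (x * fact h * real h * real g * real N / pi)) ^ h < real (card A) ^ h"
      using \<open>0 < \<epsilon>\<close> assms by (intro power_strict_mono) auto
    then have "y * (fact h * real g) * real h * real N / pi < real (card A) ^ h"
      using assms by (simp add: y_def power_mult_distrib ac_simps)
    then have "y < pi" and "real N * C < E"
      using Bhg_large_card_imp_bounded \<open>A \<subseteq> {1..N}\<close> \<open>Bhg_set h g A\<close> assms \<open>x < y\<close>
      by (auto simp: C_def E_def mult.assoc)
    moreover have "0 < C"
      using sinc_strict_antimono[OF \<open>0 < x\<close> \<open>x < y\<close>] \<open>y < pi\<close> assms \<open>x < y\<close> by (simp add: C_def)
    ultimately show False
      using \<open>nat \<lceil>E / C\<rceil> \<le> N\<close> by (simp add: field_simps)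
  qed
qed

end
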